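(* Let $n\ge2$ and let $g_1,\dots,g_r\in\mathbb R[X_1,\dots,X_n]$ satisfy $1-\|\mathbf X\|_2^2\in\mathcal Q(\mathbf g)$ and $\|g_i\|\le\tfrac12$ for all $i$. Let $\mathfrak c\ge1,\textit{Ł}\ge1$ satisfy $D(x)^{\textit{Ł}}\le\mathfrak c\,G(x)$ on $[-1,1]^n$, let $\gamma(n,\mathbf g)\ge1$ be a constant depending only on $n,\mathbf g$ such that every $h$ with $\min_S h>0$ lies in $\mathcal Q_\ell(\mathbf g)$ whenever $\ell\ge\gamma(n,\mathbf g)\,d(h)^{3.5n\textit{Ł}}\epsilon(h)^{-2.5n\textit{Ł}}$, and put $\gamma'(n,\mathbf g)=3^{2.5n\textit{Ł}}\gamma(n,\mathbf g)$. Let $f\in\mathbb R[\mathbf X]$ with $f\ge0$ on $S$, $f^*=\min_Sf$, and $0<\epsilon\le\|f\|$. Then $f^*-f^*_{\mathrm{SoS},\ell}\le\epsilon$ for every $$\ell\ge\gamma'(n,\mathbf g)\,d(f)^{3.5n\textit{Ł}}\,\|f\|^{2.5n\textit{Ł}}\,\epsilon^{-2.5n\textit{Ł}}.$$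
   Context: $\Sigma^2$ sums of squares; $S=\{x:g_i(x)\ge0\ \forall i\}$ (nonempty); $\mathcal Q(\mathbf g)=\Sigma^2+\sum_i\Sigma^2g_i$; $\mathcal Q_\ell(\mathbf g)=\{s_0+\sum_is_ig_i: s_j\in\Sigma^2,\deg s_0\le\ell,\deg(s_ig_i)\le\ell\}$; $\|h\|=\max_{[-1,1]^n}|h|$; $d(h)=\deg h$; $\epsilon(h)=\min_Sh/\|h\|$; $G(x)=|\min\{g_1(x),\dots,g_r(x),0\}|$, $D(x)=\operatorname{dist}(x,S)$. The SoS relaxation value of order $\ell$ is $f^*_{\mathrm{SoS},\ell}=\sup\{\lambda\in\mathbb R: f-\lambda\in\mathcal Q_{2\ell}(\mathbf g)\}$. *)

theory Defs
  imports "HOL-Analysis.Analysis" "HOL-Library.Poly_Mapping"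
begin

text \<open>Real multivariate polynomials in the variables indexed by the finite type 'n
  (so n = CARD('n)): a finitely supported map from exponent vectors (monomials)
  to real coefficients.\<close>

type_synonym 'n mpoly = "('n \<Rightarrow>\<^sub>0 nat) \<Rightarrow>\<^sub>0 real"

definition mpeval :: "'n::finite mpoly \<Rightarrow> real^'n \<Rightarrow> real" where
  "mpeval p x = (\<Sum>m\<in>Poly_Mapping.keys p. Poly_Mapping.lookup p m * (\<Prod>i\<in>Poly_Mapping.keys m. (x $ i) ^ Poly_Mapping.lookup m i))"

text \<open>total degree (degree of the zero polynomial is 0)\<close>
definition mpdeg :: "'n::finite mpoly \<Rightarrow> nat" where
  "mpdeg p = Max (insert 0 ((\<lambda>m::'n \<Rightarrow>\<^sub>0 nat. \<Sum>i\<in>Poly_Mapping.keys m. Poly_Mapping.lookup m i) ` Poly_Mapping.keys p))"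

definition mpconst :: "real \<Rightarrow> 'n::finite mpoly" where
  "mpconst c = Poly_Mapping.single 0 c"

definition mpvar :: "'n::finite \<Rightarrow> 'n mpoly" where
  "mpvar i = Poly_Mapping.single (Poly_Mapping.single i 1) 1"

definition ball_poly :: "'n::finite mpoly" where
  "ball_poly = 1 - (\<Sum>i\<in>UNIV. mpvar i * mpvar i)"

definition is_sos :: "'n::finite mpoly \<Rightarrow> bool" where
  "is_sos p \<longleftrightarrow> (\<exists>qs. p = sum_list (map (\<lambda>q. q * q) qs))"

definition semialg :: "(nat \<Rightarrow> 'n::finite mpoly) \<Rightarrow> nat \<Rightarrow> (real^'n) set" where
  "semialg g r = {x. \<forall>i<r. mpeval (g i) x \<ge> 0}"

definition quadmod :: "(nat \<Rightarrow> 'n::finite mpoly) \<Rightarrow> nat \<Rightarrow> 'n mpoly set" where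
  "quadmod g r = {p. \<exists>s0 s. is_sos s0 \<and> (\<forall>i<r. is_sos (s i)) \<and>
                       p = s0 + (\<Sum>i<r. s i * g i)}"

definition quadmod_trunc :: "(nat \<Rightarrow> 'n::finite mpoly) \<Rightarrow> nat \<Rightarrow> nat \<Rightarrow> 'n mpoly set" where
  "quadmod_trunc g r l = {p. \<exists>s0 s. is_sos s0 \<and> (\<forall>i<r. is_sos (s i)) \<and>
       mpdeg s0 \<le> l \<and> (\<forall>i<r. mpdeg (s i * g i) \<le> l) \<and>
       p = s0 + (\<Sum>i<r. s i * g i)}"

definition cube :: "(real^'n::finite) set" where
  "cube = {x. \<forall>i. \<bar>x $ i\<bar> \<le> 1}"

definition supnorm :: "'n::finite mpoly \<Rightarrow> real" where
  "supnorm h = (SUP x\<in>cube. \<bar>mpeval h x\<bar>)"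

definition minS :: "(nat \<Rightarrow> 'n::finite mpoly) \<Rightarrow> nat \<Rightarrow> 'n mpoly \<Rightarrow> real" where
  "minS g r h = (INF x\<in>semialg g r. mpeval h x)"

definition eps_of :: "(nat \<Rightarrow> 'n::finite mpoly) \<Rightarrow> nat \<Rightarrow> 'n mpoly \<Rightarrow> real" where
  "eps_of g r h = minS g r h / supnorm h"

definition Gfun :: "(nat \<Rightarrow> 'n::finite mpoly) \<Rightarrow> nat \<Rightarrow> real^'n \<Rightarrow> real" where
  "Gfun g r x = \<bar>Min (insert 0 ((\<lambda>i. mpeval (g i) x) ` {..<r}))\<bar>"

definition Dfun :: "(nat \<Rightarrow> 'n::finite mpoly) \<Rightarrow> nat \<Rightarrow> real^'n \<Rightarrow> real" where
  "Dfun g r x = infdist x (semialg g r)"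

definition sos_val :: "(nat \<Rightarrow> 'n::finite mpoly) \<Rightarrow> nat \<Rightarrow> 'n mpoly \<Rightarrow> nat \<Rightarrow> real" where
  "sos_val g r f l = Sup {lam. f - mpconst lam \<in> quadmod_trunc g r (2 * l)}"

end

theory Submission
  imports Defs
begin

text \<open>Shift \<open>f\<close> down by \<open>\<lambda> = f\<^sup>* - \<epsilon>\<close>. The shifted polynomial \<open>h = f - \<lambda>\<close> has
  \<open>min\<^sub>S h = \<epsilon>\<close> and \<open>d(h) \<le> d(f)\<close>; since the Archimedean certificate forces \<open>S \<subseteq> [-1,1]\<^sup>n\<close>,
  we have \<open>0 \<le> f\<^sup>* \<le> \<parallel>f\<parallel>\<close>, hence \<open>\<parallel>h\<parallel> \<le> 3\<parallel>f\<parallel>\<close> and \<open>\<epsilon>(h) \<ge> \<epsilon>/(3\<parallel>f\<parallel>)\<close>. The assumed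
  degree bound for positive polynomials therefore puts \<open>h\<close> into \<open>Q\<^sub>2\<^sub>\<ell>(g)\<close>, i.e. \<open>\<lambda>\<close> is a
  feasible value of the SoS relaxation and \<open>f\<^sup>* - \<epsilon> \<le> f\<^sup>*\<^sub>S\<^sub>o\<^sub>S\<^sub>,\<^sub>\<ell>\<close>.\<close>

definition monomial_eval :: "('n::finite \<Rightarrow>\<^sub>0 nat) \<Rightarrow> real^'n \<Rightarrow> real" where
  "monomial_eval m x = (\<Prod>i\<in>UNIV. (x $ i) ^ Poly_Mapping.lookup m i)"

lemma monomial_eval_add: "monomial_eval (a + b) x = monomial_eval a x * monomial_eval b x"
  unfolding monomial_eval_def by (simp add: lookup_add power_add prod.distrib)

lemma mpeval_eq_sum_monomials:
  "mpeval p x = (\<Sum>m\<in>Poly_Mapping.keys p. Poly_Mapping.lookup p m * monomial_eval m x)"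
proof -
  have "(\<Prod>i\<in>Poly_Mapping.keys m. (x $ i) ^ Poly_Mapping.lookup m i) = monomial_eval m x" for m
    unfolding monomial_eval_def by (rule prod.mono_neutral_left) (auto simp: in_keys_iff)
  then show ?thesis
    unfolding mpeval_def by simp
qed

lemma mpeval_eq_sum_superset:
  assumes "finite A" "Poly_Mapping.keys p \<subseteq> A"
  shows "mpeval p x = (\<Sum>m\<in>A. Poly_Mapping.lookup p m * monomial_eval m x)"
  unfolding mpeval_eq_sum_monomials
  using assms by (intro sum.mono_neutral_left) (auto simp: in_keys_iff)

lemma mpeval_add: "mpeval (p + q) x = mpeval p x + mpeval q x"
proof -
  let ?A = "Poly_Mapping.keys p \<union> Poly_Mapping.keys q"
  have "mpeval (p + q) x = (\<Sum>m\<in>?A. Poly_Mapping.lookup (p + q) m * monomial_eval m x)"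
    using keys_add[of p q] by (intro mpeval_eq_sum_superset) auto
  also have "\<dots> = (\<Sum>m\<in>?A. Poly_Mapping.lookup p m * monomial_eval m x)
                 + (\<Sum>m\<in>?A. Poly_Mapping.lookup q m * monomial_eval m x)"
    by (simp add: lookup_add distrib_right sum.distrib)
  also have "\<dots> = mpeval p x + mpeval q x"
    by (subst (1 2) mpeval_eq_sum_superset[of ?A]) auto
  finally show ?thesis .
qed

lemma mpeval_zero [simp]: "mpeval 0 x = 0"
  unfolding mpeval_def by simp

lemma mpeval_uminus: "mpeval (- p) x = - mpeval p x"
  using mpeval_add[of p "- p" x] by simp

lemma mpeval_diff: "mpeval (p - q) x = mpeval p x - mpeval q x"
  using mpeval_add[of p "- q" x] by (simp add: mpeval_uminus)

lemma mpeval_sum: "mpeval (sum F A) x = (\<Sum>a\<in>A. mpeval (F a) x)"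
  by (induction A rule: infinite_finite_induct)
    (auto simp: mpeval_add)

lemma mpeval_single: "mpeval (Poly_Mapping.single m c) x = c * monomial_eval m x"
  unfolding mpeval_eq_sum_monomials by auto

lemma poly_mapping_sum_single_keys:
  "p = (\<Sum>m\<in>Poly_Mapping.keys p. Poly_Mapping.single m (Poly_Mapping.lookup p m))"
proof (rule poly_mapping_eqI)
  fix k
  show "Poly_Mapping.lookup p k
      = Poly_Mapping.lookup (\<Sum>m\<in>Poly_Mapping.keys p. Poly_Mapping.single m (Poly_Mapping.lookup p m)) k"
    unfolding lookup_sum lookup_single
    by (cases "k \<in> Poly_Mapping.keys p") (auto simp: when_def in_keys_iff)
qed

lemma mpeval_mult: "mpeval (p * q) x = mpeval p x * mpeval q x"
proof -
  have "p * q = (\<Sum>a\<in>Poly_Mapping.keys p. Poly_Mapping.single a (Poly_Mapping.lookup p a)) *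
                (\<Sum>b\<in>Poly_Mapping.keys q. Poly_Mapping.single b (Poly_Mapping.lookup q b))"
    using poly_mapping_sum_single_keys[of p] poly_mapping_sum_single_keys[of q] by simp
  also have "\<dots> = (\<Sum>a\<in>Poly_Mapping.keys p. \<Sum>b\<in>Poly_Mapping.keys q.
      Poly_Mapping.single (a + b) (Poly_Mapping.lookup p a * Poly_Mapping.lookup q b))"
    unfolding sum_product by (simp add: mult_single)
  finally have "mpeval (p * q) x = (\<Sum>a\<in>Poly_Mapping.keys p. \<Sum>b\<in>Poly_Mapping.keys q.
      (Poly_Mapping.lookup p a * monomial_eval a x) * (Poly_Mapping.lookup q b * monomial_eval b x))"
    by (simp add: mpeval_sum mpeval_single monomial_eval_add mult_ac)
  also have "\<dots> = mpeval p x * mpeval q x"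
    by (simp add: mpeval_eq_sum_monomials sum_product)
  finally show ?thesis .
qed

lemma mpeval_mpconst [simp]: "mpeval (mpconst c) x = c"
  unfolding mpconst_def mpeval_single monomial_eval_def by simp

lemma mpeval_one [simp]: "mpeval 1 x = 1"
  using mpeval_mpconst[of 1 x] unfolding mpconst_def by simp

lemma mpeval_mpvar [simp]: "mpeval (mpvar i) x = x $ i"
proof -
  have "(\<Prod>j\<in>UNIV. x $ j ^ (Suc 0 when i = j)) = (\<Prod>j\<in>UNIV. if i = j then x $ j else 1)"
    by (rule prod.cong) (auto simp: when_def)
  then show ?thesis
    unfolding mpvar_def mpeval_single monomial_eval_def lookup_single by (simp add: prod.delta)
qed

lemma is_sos_nonneg:
  fixes p :: "'n::finite mpoly"
  shows "is_sos p \<Longrightarrow> 0 \<le> mpeval p x"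
proof -
  have "0 \<le> mpeval (sum_list (map (\<lambda>q. q * q) qs)) x" for qs :: "'n::finite mpoly list"
    by (induction qs) (auto simp: mpeval_add mpeval_mult)
  then show "is_sos p \<Longrightarrow> 0 \<le> mpeval p x"
    unfolding is_sos_def by auto
qed

lemma quadmod_nonneg:
  assumes "p \<in> quadmod g r" "x \<in> semialg g r"
  shows "0 \<le> mpeval p x"
proof -
  from assms(1) obtain s0 s where s: "is_sos s0" "\<forall>i<r. is_sos (s i)" "p = s0 + (\<Sum>i<r. s i * g i)"
    unfolding quadmod_def by blast
  have "0 \<le> mpeval s0 x + (\<Sum>i<r. mpeval (s i) x * mpeval (g i) x)"
    using s assms(2) unfolding semialg_def
    by (intro add_nonneg_nonneg sum_nonneg mult_nonneg_nonneg) (auto intro: is_sos_nonneg)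
  then show ?thesis
    using s by (simp add: mpeval_add mpeval_sum mpeval_mult)
qed

lemma quadmod_trunc_subset_quadmod: "quadmod_trunc g r l \<subseteq> quadmod g r"
  unfolding quadmod_def quadmod_trunc_def by blast

lemma semialg_subset_cube:
  assumes "ball_poly \<in> quadmod g r"
  shows "semialg g r \<subseteq> cube"
proof
  fix x assume "x \<in> semialg g r"
  from quadmod_nonneg[OF assms this] have sum_le: "(\<Sum>i\<in>UNIV. x $ i * x $ i) \<le> 1"
    unfolding ball_poly_def by (simp add: mpeval_diff mpeval_sum mpeval_mult)
  have "x $ i * x $ i \<le> 1" for i
    using member_le_sum[of i UNIV "\<lambda>i. x $ i * x $ i"] sum_le by simp
  then have "\<bar>x $ i\<bar> \<le> 1" for i
    by (metis abs_le_square_iff abs_one mult_1 power2_eq_square)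
  then show "x \<in> cube"
    unfolding cube_def by auto
qed

lemma abs_mpeval_le_sum_abs_coeffs:
  assumes "x \<in> cube"
  shows "\<bar>mpeval h x\<bar> \<le> (\<Sum>m\<in>Poly_Mapping.keys h. \<bar>Poly_Mapping.lookup h m\<bar>)"
proof -
  have monomial_le_1: "\<bar>monomial_eval m x\<bar> \<le> 1" for m
  proof -
    have "\<bar>monomial_eval m x\<bar> = (\<Prod>i\<in>UNIV. \<bar>x $ i\<bar> ^ Poly_Mapping.lookup m i)"
      unfolding monomial_eval_def by (simp add: abs_prod power_abs)
    also have "\<dots> \<le> 1"
      using assms unfolding cube_def by (intro prod_le_1) (auto intro: power_le_one)
    finally show ?thesis .
  qed
  have "\<bar>mpeval h x\<bar> \<le> (\<Sum>m\<in>Poly_Mapping.keys h. \<bar>Poly_Mapping.lookup h m * monomial_eval m x\<bar>)"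
    unfolding mpeval_eq_sum_monomials by (rule sum_abs)
  also have "\<dots> \<le> (\<Sum>m\<in>Poly_Mapping.keys h. \<bar>Poly_Mapping.lookup h m\<bar>)"
    using monomial_le_1 by (intro sum_mono) (auto simp: abs_mult intro: mult_left_le)
  finally show ?thesis .
qed

lemma abs_mpeval_le_supnorm: "x \<in> cube \<Longrightarrow> \<bar>mpeval h x\<bar> \<le> supnorm h"
  unfolding supnorm_def
  by (rule cSUP_upper) (auto intro: bdd_aboveI2 abs_mpeval_le_sum_abs_coeffs)

lemma supnorm_diff_mpconst_le:
  fixes h :: "'n::finite mpoly"
  shows "supnorm (h - mpconst c) \<le> supnorm h + \<bar>c\<bar>"
  unfolding supnorm_def[of "h - mpconst c"]
proof (rule cSUP_least)
  show "cube \<noteq> {}"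
    unfolding cube_def by (auto intro!: exI[of _ 0])
  fix x :: "real^'n" assume "x \<in> cube"
  then show "\<bar>mpeval (h - mpconst c) x\<bar> \<le> supnorm h + \<bar>c\<bar>"
    using abs_mpeval_le_supnorm[of x h] by (simp add: mpeval_diff abs_triangle_ineq4 add_mono)
qed

lemma mpdeg_diff_mpconst_le: "mpdeg (f - mpconst c) \<le> mpdeg f"
proof -
  let ?deg = "\<lambda>m::'n \<Rightarrow>\<^sub>0 nat. \<Sum>i\<in>Poly_Mapping.keys m. Poly_Mapping.lookup m i"
  have "Poly_Mapping.keys (f - mpconst c) \<subseteq> Poly_Mapping.keys f \<union> {0}"
    using keys_diff[of f "mpconst c"] unfolding mpconst_def by (auto split: if_splits)
  then have "insert 0 (?deg ` Poly_Mapping.keys (f - mpconst c)) \<subseteq> insert 0 (?deg ` Poly_Mapping.keys f)"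
    by auto
  then show ?thesis
    unfolding mpdeg_def by (intro Max_mono) auto
qed

lemma minS_le:
  assumes "x \<in> semialg g r" "\<forall>y\<in>semialg g r. b \<le> mpeval f y"
  shows "minS g r f \<le> mpeval f x"
  unfolding minS_def using assms by (intro cINF_lower bdd_belowI2) auto

lemma minS_greatest:
  assumes "semialg g r \<noteq> {}" "\<forall>y\<in>semialg g r. b \<le> mpeval f y"
  shows "b \<le> minS g r f"
  unfolding minS_def using assms by (intro cINF_greatest) auto

lemma minS_diff_mpconst:
  assumes "semialg g r \<noteq> {}" "\<forall>y\<in>semialg g r. b \<le> mpeval f y"
  shows "minS g r (f - mpconst c) = minS g r f - c"
proof -
  have "minS g r (f - mpconst c) = (INF x\<in>semialg g r. - c + mpeval f x)"
    unfolding minS_def by (simp add: mpeval_diff)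
  also have "\<dots> = - c + minS g r f"
    unfolding minS_def using assms by (intro Inf_add_eq bdd_belowI2) auto
  finally show ?thesis by simp
qed

lemma le_sos_val:
  assumes "semialg g r \<noteq> {}" "f - mpconst t \<in> quadmod_trunc g r (2 * l)"
  shows "t \<le> sos_val g r f l"
proof -
  obtain x where x: "x \<in> semialg g r"
    using assms(1) by blast
  have "\<mu> \<le> mpeval f x" if "f - mpconst \<mu> \<in> quadmod_trunc g r (2 * l)" for \<mu>
    using quadmod_nonneg[OF _ x, of "f - mpconst \<mu>"] that quadmod_trunc_subset_quadmod
    by (auto simp: mpeval_diff)
  then show ?thesis
    unfolding sos_val_def using assms(2) by (intro cSup_upper bdd_aboveI) auto
qed

lemma eps_of_shift_ge:
  assumes S_ne: "semialg g r \<noteq> {}" and S_cube: "semialg g r \<subseteq> cube"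
    and f_nonneg: "\<forall>x\<in>semialg g r. 0 \<le> mpeval f x"
    and \<epsilon>_pos: "0 < \<epsilon>" and \<epsilon>_le: "\<epsilon> \<le> supnorm f"
  shows "\<epsilon> / (3 * supnorm f) \<le> eps_of g r (f - mpconst (minS g r f - \<epsilon>))"
proof -
  define h where "h = f - mpconst (minS g r f - \<epsilon>)"
  obtain x where x: "x \<in> semialg g r"
    using S_ne by blast
  have min_h: "minS g r h = \<epsilon>"
    unfolding h_def using minS_diff_mpconst[OF S_ne f_nonneg] by simp
  have min_f_le: "minS g r f \<le> mpeval f x"
    using minS_le[OF x f_nonneg] .
  have "mpeval f x \<le> supnorm f"
    using abs_mpeval_le_supnorm[of x f] x S_cube by auto
  moreover have "0 \<le> minS g r f"
    using minS_greatest[OF S_ne f_nonneg] .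
  ultimately have "\<bar>minS g r f - \<epsilon>\<bar> \<le> supnorm f"
    using min_f_le \<epsilon>_pos \<epsilon>_le by linarith
  then have norm_h: "supnorm h \<le> 3 * supnorm f"
    using supnorm_diff_mpconst_le[of f "minS g r f - \<epsilon>"] \<epsilon>_pos \<epsilon>_le unfolding h_def by linarith
  have "\<epsilon> \<le> mpeval h x"
    unfolding h_def using min_f_le by (simp add: mpeval_diff)
  then have "0 < supnorm h"
    using abs_mpeval_le_supnorm[of x h] x S_cube \<epsilon>_pos by auto
  then show ?thesis
    unfolding h_def[symmetric] eps_of_def min_h using norm_h \<epsilon>_pos by (intro divide_left_mono) auto
qed

lemma degree_bound_of_shift_le:
  fixes d d' :: nat and \<gamma> e \<epsilon> F P N :: real
  assumes "d \<le> d'" "0 \<le> \<gamma>" "0 \<le> P" "0 < N" "0 < \<epsilon>" "0 < F" "\<epsilon> / (3 * F) \<le> e"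
  shows "\<gamma> * real d powr P * e powr (- N) \<le> (3 powr N * \<gamma>) * real d' powr P * F powr N * \<epsilon> powr (- N)"
proof -
  have "e powr (- N) \<le> (\<epsilon> / (3 * F)) powr (- N)"
    using assms by (intro powr_mono2') auto
  also have "\<dots> = 3 powr N * F powr N * \<epsilon> powr (- N)"
    using assms by (simp add: powr_divide powr_mult powr_minus field_simps)
  finally have "\<gamma> * real d powr P * e powr (- N) \<le> \<gamma> * real d' powr P * (3 powr N * F powr N * \<epsilon> powr (- N))"
    using assms by (intro mult_mono powr_mono2) auto
  then show ?thesis
    by (simp add: mult_ac)
qed

theorem mainTheorem5:
  fixes g :: "nat \<Rightarrow> 'n::finite mpoly" and r :: nat
    and c L \<gamma> \<epsilon> :: real and f :: "'n mpoly" and l :: nat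
  assumes n2: "CARD('n) \<ge> 2"
    and S_ne: "semialg g r \<noteq> {}"
    and arch: "ball_poly \<in> quadmod g r"
    and gnorm: "\<forall>i<r. supnorm (g i) \<le> 1/2"
    and c1: "c \<ge> 1" and L1: "L \<ge> 1"
    and loj: "\<forall>x\<in>cube. Dfun g r x powr L \<le> c * Gfun g r x"
    and \<gamma>1: "\<gamma> \<ge> 1"
    and \<gamma>_prop: "\<forall>h::'n mpoly. \<forall>k::nat. minS g r h > 0 \<longrightarrow>
         real k \<ge> \<gamma> * real (mpdeg h) powr (3.5 * CARD('n) * L) * eps_of g r h powr (- 2.5 * CARD('n) * L)
         \<longrightarrow> h \<in> quadmod_trunc g r k"
    and fpos: "\<forall>x\<in>semialg g r. mpeval f x \<ge> 0"
    and \<epsilon>pos: "0 < \<epsilon>" and \<epsilon>le: "\<epsilon> \<le> supnorm f"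
    and lbig: "real l \<ge> (3 powr (2.5 * CARD('n) * L) * \<gamma>) * real (mpdeg f) powr (3.5 * CARD('n) * L)
                 * supnorm f powr (2.5 * CARD('n) * L) * \<epsilon> powr (- 2.5 * CARD('n) * L)"
  shows "minS g r f - sos_val g r f l \<le> \<epsilon>"
proof -
  define t where "t = minS g r f - \<epsilon>"
  define h where "h = f - mpconst t"
  define P where "P = 3.5 * real CARD('n) * L"
  define N where "N = 2.5 * real CARD('n) * L"
  have "minS g r h = \<epsilon>"
    unfolding h_def t_def using minS_diff_mpconst[OF S_ne fpos] by simp
  moreover have "\<gamma> * real (mpdeg h) powr P * eps_of g r h powr (- N) \<le> real (2 * l)"
  proof -
    have "\<epsilon> / (3 * supnorm f) \<le> eps_of g r h"
      unfolding h_def t_def using eps_of_shift_ge[OF S_ne semialg_subset_cube[OF arch] fpos \<epsilon>pos \<epsilon>le] .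
    then have "\<gamma> * real (mpdeg h) powr P * eps_of g r h powr (- N)
        \<le> (3 powr N * \<gamma>) * real (mpdeg f) powr P * supnorm f powr N * \<epsilon> powr (- N)"
      using mpdeg_diff_mpconst_le[of f t] \<gamma>1 L1 \<epsilon>pos \<epsilon>le unfolding h_def P_def N_def
      by (intro degree_bound_of_shift_le) auto
    also have "\<dots> \<le> real l"
      using lbig by (simp add: P_def N_def)
    finally show ?thesis by simp
  qed
  ultimately have "h \<in> quadmod_trunc g r (2 * l)"
    using \<gamma>_prop \<epsilon>pos by (simp add: P_def N_def)
  then have "t \<le> sos_val g r f l"
    unfolding h_def by (rule le_sos_val[OF S_ne])
  then show ?thesis
    unfolding t_def by linarith
qed

end
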